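(* Let $(X,d)$ be a compact metric space whose open balls are connected, $\lambda\in(0,1)$, $U\subset\mathbb{R}^M$ of positive Lebesgue measure, $\{f_\mu\}_{\mu\in U}$ a family of piecewise $\lambda$-contractions on $X$, and $\mu^*\in U$. If $\{\mathscr{C}^{(n)}_\mu\}_{\mu\in U}$ is stable at $\mu^*$ for every $n\ge1$ and $H_{\mathrm{mult}}(f_{\mu^*})=0$, then $\{f_\mu\}_{\mu\in U}$ satisfies Hypothesis (E) at $\mu^*$.
   Context: A piecewise $\lambda$-contraction $f\colon X\to X$: there exist $N\in\mathbb{N}$, open connected pairwise disjoint $A_1,\dots,A_N\subset X$ with dense union $X'$, and bi-Lipschitz $\varphi_i\colon X\to X$ with Lipschitz constant $\le\lambda$ and $f|_{A_i}=\varphi_i|_{A_i}$; $S(f)=X\setminus X'$. A family $\{f_\mu\}_{\mu\in U}$: each $f_\mu$ is such a map with the same label set $\mathcal{A}=\{1,\dots,N\}$, partition $\{A_{i,\mu}\}$ and maps $\{\varphi_{i,\mu}\}$. A point $x$ is regular of order $n$ for $f_\mu$ if $f_\mu^j(x)\notin S(f_\mu)$ for $0\le j<n$; its itinerary of order $n$ is $(i_0,\dots,i_{n-1})$ with $f_\mu^j(x)\in A_{i_j,\mu}$; $\mathcal{I}_n(f_\mu)$ is the set of such itineraries. $\mathscr{C}^{(1)}_\mu=\{A_{i,\mu}\}_{i\in\mathcal{A}}$, and for $n\ge2$, $\mathscr{C}^{(n)}_\mu$ is the collection of the nonempty sets $A^\alpha_\mu=A_{i_0,\mu}\cap\varphi_{i_0,\mu}^{-1}(A_{i_1,\mu})\cap\cdots\cap(\varphi_{i_{n-2},\mu}\circ\cdots\circ\varphi_{i_0,\mu})^{-1}(A_{i_{n-1},\mu})$,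 $\alpha=(i_0,\dots,i_{n-1})\in\mathcal{A}^n$. For a finite collection $\mathscr{C}$ of subsets of $X$, $\mathrm{mult}(\mathscr{C})=\max_{x\in X}\#\{A\in\mathscr{C}:x\in\overline A\}$. $H_{\mathrm{mult}}(f_\mu)=\limsup_{n\to\infty}\frac1n\log\mathrm{mult}(\mathscr{C}^{(n)}_\mu)$. Let $U_\delta(\mu^* )=U\cap B_\delta(\mu^* )$. For fixed $n$, $\{\mathscr{C}^{(n)}_\mu\}_{\mu\in U}$ is stable at $\mu^*$ if there is $\delta>0$ with (i) $\mathcal{I}_n(f_\mu)=\mathcal{I}_n(f_{\mu^*})$ for all $\mu\in U_\delta(\mu^* )$, and (ii) $d_H(A^\alpha_\mu,A^\alpha_{\mu^*})\to0$ as $\mu\to\mu^*$ for every $\alpha\in\mathcal{I}_n(f_{\mu^*})$, where $d_H$ is the Hausdorff distance. Hypothesis (E) at $\mu^*$: $\lim_{\delta\to0^+}\limsup_{n\to\infty}\frac1n\log\#\mathcal{J}_n^\delta(\mu^* )=0$, where $\mathcal{J}_n^\delta(\mu^* )=\bigcup_{\mu\in U_\delta(\mu^* )}\mathcal{I}_n(f_\mu)$. *)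

theory Defs
  imports "HOL-Analysis.Analysis"
begin

definition hausdorff_dist :: "'a::metric_space set \<Rightarrow> 'a set \<Rightarrow> real" where
  "hausdorff_dist A B = max (SUP a\<in>A. infdist a B) (SUP b\<in>B. infdist b A)"

definition bilip_contr :: "'a::metric_space set \<Rightarrow> real \<Rightarrow> ('a \<Rightarrow> 'a) \<Rightarrow> bool" where
  "bilip_contr X lam g \<longleftrightarrow> g ` X \<subseteq> X \<and> lam-lipschitz_on X g \<and>
     (\<exists>c>0. \<forall>x\<in>X. \<forall>y\<in>X. c * dist x y \<le> dist (g x) (g y))"

definition pw_contraction ::
  "'a::metric_space set \<Rightarrow> real \<Rightarrow> nat \<Rightarrow> (nat \<Rightarrow> 'a set) \<Rightarrow> (nat \<Rightarrow> 'a \<Rightarrow> 'a) \<Rightarrow> ('a \<Rightarrow> 'a) \<Rightarrow> bool"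
  where
  "pw_contraction X lam N A phi f \<longleftrightarrow>
     f ` X \<subseteq> X \<and>
     (\<forall>i\<in>{1..N}. A i \<subseteq> X \<and> openin (top_of_set X) (A i) \<and> connected (A i)) \<and>
     (\<forall>i\<in>{1..N}. \<forall>j\<in>{1..N}. i \<noteq> j \<longrightarrow> A i \<inter> A j = {}) \<and>
     X \<subseteq> closure (\<Union>i\<in>{1..N}. A i) \<and>
     (\<forall>i\<in>{1..N}. bilip_contr X lam (phi i)) \<and>
     (\<forall>i\<in>{1..N}. \<forall>x\<in>A i. f x = phi i x)"

definition sing_set :: "'a set \<Rightarrow> nat \<Rightarrow> (nat \<Rightarrow> 'a set) \<Rightarrow> 'a set" where
  "sing_set X N A = X - (\<Union>i\<in>{1..N}. A i)"

definition itineraries ::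
  "'a set \<Rightarrow> nat \<Rightarrow> (nat \<Rightarrow> 'a set) \<Rightarrow> ('a \<Rightarrow> 'a) \<Rightarrow> nat \<Rightarrow> nat list set" where
  "itineraries X N A f n = {\<alpha>. length \<alpha> = n \<and> set \<alpha> \<subseteq> {1..N} \<and>
     (\<exists>x\<in>X. (\<forall>j<n. (f ^^ j) x \<notin> sing_set X N A) \<and> (\<forall>j<n. (f ^^ j) x \<in> A (\<alpha> ! j)))}"

text \<open>Cylinder A^alpha = A_{i0} \<inter> phi_{i0}^{-1}(A_{i1}) \<inter> ... ; the composition
  phi_{i_{j-1}} o ... o phi_{i_0} is fold over the first j labels.\<close>
definition cylinder :: "(nat \<Rightarrow> 'a set) \<Rightarrow> (nat \<Rightarrow> 'a \<Rightarrow> 'a) \<Rightarrow> nat list \<Rightarrow> 'a set" where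
  "cylinder A phi \<alpha> = {x. \<forall>j<length \<alpha>. fold phi (take j \<alpha>) x \<in> A (\<alpha> ! j)}"

definition cyl_coll :: "nat \<Rightarrow> (nat \<Rightarrow> 'a set) \<Rightarrow> (nat \<Rightarrow> 'a \<Rightarrow> 'a) \<Rightarrow> nat \<Rightarrow> 'a set set" where
  "cyl_coll N A phi n = {cylinder A phi \<alpha> | \<alpha>. length \<alpha> = n \<and> set \<alpha> \<subseteq> {1..N} \<and> cylinder A phi \<alpha> \<noteq> {}}"

definition mult :: "'a::topological_space set \<Rightarrow> 'a set set \<Rightarrow> nat" where
  "mult X C = (SUP x\<in>X. card {B\<in>C. x \<in> closure B})"

definition H_mult :: "'a::metric_space set \<Rightarrow> nat \<Rightarrow> (nat \<Rightarrow> 'a set) \<Rightarrow> (nat \<Rightarrow> 'a \<Rightarrow> 'a) \<Rightarrow> ereal" where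
  "H_mult X N A phi = limsup (\<lambda>n. ereal (ln (real (mult X (cyl_coll N A phi n))) / real n))"

definition stable_at ::
  "'a::metric_space set \<Rightarrow> 'm::metric_space set \<Rightarrow> nat \<Rightarrow> ('m \<Rightarrow> nat \<Rightarrow> 'a set) \<Rightarrow>
   ('m \<Rightarrow> nat \<Rightarrow> 'a \<Rightarrow> 'a) \<Rightarrow> ('m \<Rightarrow> 'a \<Rightarrow> 'a) \<Rightarrow> nat \<Rightarrow> 'm \<Rightarrow> bool" where
  "stable_at X U N A phi f n \<mu>0 \<longleftrightarrow>
     (\<exists>\<delta>>0. (\<forall>\<mu>\<in>U \<inter> ball \<mu>0 \<delta>. itineraries X N (A \<mu>) (f \<mu>) n = itineraries X N (A \<mu>0) (f \<mu>0) n) \<and>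
       (\<forall>\<alpha>\<in>itineraries X N (A \<mu>0) (f \<mu>0) n.
          ((\<lambda>\<mu>. hausdorff_dist (cylinder (A \<mu>) (phi \<mu>) \<alpha>) (cylinder (A \<mu>0) (phi \<mu>0) \<alpha>)) \<longlongrightarrow> 0)
            (at \<mu>0 within U)))"

definition J_set ::
  "'a set \<Rightarrow> 'm::metric_space set \<Rightarrow> nat \<Rightarrow> ('m \<Rightarrow> nat \<Rightarrow> 'a set) \<Rightarrow> ('m \<Rightarrow> 'a \<Rightarrow> 'a) \<Rightarrow>
   real \<Rightarrow> 'm \<Rightarrow> nat \<Rightarrow> nat list set" where
  "J_set X U N A f \<delta> \<mu>0 n = (\<Union>\<mu>\<in>U \<inter> ball \<mu>0 \<delta>. itineraries X N (A \<mu>) (f \<mu>) n)"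

definition hypothesis_E ::
  "'a set \<Rightarrow> 'm::metric_space set \<Rightarrow> nat \<Rightarrow> ('m \<Rightarrow> nat \<Rightarrow> 'a set) \<Rightarrow> ('m \<Rightarrow> 'a \<Rightarrow> 'a) \<Rightarrow> 'm \<Rightarrow> bool" where
  "hypothesis_E X U N A f \<mu>0 \<longleftrightarrow>
     ((\<lambda>\<delta>. limsup (\<lambda>n. ereal (ln (real (card (J_set X U N A f \<delta> \<mu>0 n))) / real n)))
        \<longlongrightarrow> 0) (at_right 0)"

end

theory Submission
  imports Defs
begin

(* Write I_m for the itineraries of order m of f_mu0. If I_m is constant for mu near mu0, cutting
   an itinerary of order k m + s into k blocks of length m and a rest gives
   #J_{km+s} <= #I_m^k N^s, so the limsup in Hypothesis (E) is at most (log #I_m) / m for small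
   delta. It remains to make (log #I_m) / m small. By a Lebesgue-number argument on the compact X
   there is r > 0 such that every r-ball meets at most mult(C^(m)) cylinders of order m. Points
   sharing an itinerary of order n are mapped by f^n = phi_{i_{n-1}} o ... o phi_{i_0} into a set
   of diameter at most lam^n diam X < r for large n, whence #I_{n+m} <= #I_n mult(C^(m)) and the
   growth rate of #I is at most (log mult(C^(m))) / m, which is small for suitable m since
   H_mult = 0. Only condition (i) of stability is needed. *)

section \<open>Growth rates of counting sequences\<close>

lemma ln_nat_nonneg: "0 \<le> ln (real (n::nat))"
  by (cases "n = 0") auto

lemma ln_le_of_le_power_mult_power:
  assumes "c \<le> a ^ p * b ^ q"
  shows "ln (real c) \<le> real p * ln (real a) + real q * ln (real b)"
proof (cases "c = 0")
  case True then show ?thesis using ln_nat_nonneg[of a] ln_nat_nonneg[of b] by simp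
next
  case False
  then have pos: "0 < a ^ p * b ^ q" using assms by linarith
  then have ab: "p = 0 \<or> a > 0" "q = 0 \<or> b > 0" by (auto simp: zero_less_mult_iff zero_less_power_eq)
  have "ln (real c) \<le> ln (real (a ^ p * b ^ q))"
    using assms False pos by (subst ln_le_cancel_iff) (simp_all only: of_nat_le_iff of_nat_0_less_iff)
  also have "\<dots> = real p * ln (real a) + real q * ln (real b)"
    using ab by (auto simp: ln_mult ln_realpow)
  finally show ?thesis .
qed

lemma limsup_ln_div_nonneg: "0 \<le> limsup (\<lambda>n. ereal (ln (real (c n :: nat)) / real n))"
  by (intro le_Limsup always_eventually) (simp_all add: ln_nat_nonneg)

lemma exists_ln_div_le_of_eventually_submult:
  fixes c :: "nat \<Rightarrow> nat"
  assumes m: "m \<ge> 1" and submult: "\<And>n. n \<ge> n0 \<Longrightarrow> c (n + m) \<le> c n * M"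
    and rate: "ln (real M) / real m < \<epsilon>"
  shows "\<exists>n\<ge>1. ln (real (c n)) / real n \<le> \<epsilon>"
proof -
  have iter: "c (n0 + k * m) \<le> c n0 ^ 1 * M ^ k" for k
  proof (induction k)
    case (Suc k)
    have "c (n0 + Suc k * m) \<le> c (n0 + k * m) * M"
      using submult[of "n0 + k * m"] by (simp add: algebra_simps)
    also have "\<dots> \<le> c n0 ^ 1 * M ^ Suc k" using Suc by simp
    finally show ?case .
  qed simp
  let ?bound = "\<lambda>k. ln (real (c n0)) / real m / real k + ln (real M) / real m"
  have "?bound \<longlonglongrightarrow> 0 + ln (real M) / real m"
    by (intro tendsto_add lim_const_over_n tendsto_const)
  then have "eventually (\<lambda>k. ?bound k < \<epsilon>) sequentially"
    using rate by (intro order_tendstoD(2)) simp_all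
  then obtain k0 where k0: "\<And>k. k \<ge> k0 \<Longrightarrow> ?bound k < \<epsilon>"
    unfolding eventually_sequentially by blast
  define k where "k = max k0 1"
  have k: "k \<ge> 1" "?bound k < \<epsilon>" using k0 unfolding k_def by simp_all
  let ?n = "n0 + k * m"
  have km: "0 < real k * real m" "real k * real m \<le> real ?n" using k(1) m by simp_all
  have "ln (real (c ?n)) / real ?n \<le> ln (real (c ?n)) / (real k * real m)"
    using km by (intro divide_left_mono ln_nat_nonneg) auto
  also have "\<dots> \<le> (ln (real (c n0)) + real k * ln (real M)) / (real k * real m)"
    using ln_le_of_le_power_mult_power[OF iter[of k]] km by (intro divide_right_mono) auto
  also have "\<dots> = ?bound k" using k(1) m by (simp add: field_simps)
  finally have "ln (real (c ?n)) / real ?n \<le> \<epsilon>" using k(2) by simp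
  moreover have "?n \<ge> 1" using k(1) m by (simp add: Suc_le_eq)
  ultimately show ?thesis by blast
qed

lemma limsup_ln_div_le_of_block_bound:
  fixes c :: "nat \<Rightarrow> nat"
  assumes m: "m \<ge> 1" and block: "\<And>k s. s < m \<Longrightarrow> c (k * m + s) \<le> K ^ k * B ^ s"
  shows "limsup (\<lambda>n. ereal (ln (real (c n)) / real n)) \<le> ereal (ln (real K) / real m)"
proof -
  let ?bound = "\<lambda>n. ln (real K) / real m + real m * ln (real B) / real n"
  have "ln (real (c n)) / real n \<le> ?bound n" if n: "n \<ge> 1" for n
  proof -
    have "c n \<le> K ^ (n div m) * B ^ (n mod m)"
      using block[of "n mod m" "n div m"] m by simp
    then have "ln (real (c n)) \<le> real (n div m) * ln (real K) + real (n mod m) * ln (real B)"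
      by (rule ln_le_of_le_power_mult_power)
    also have "\<dots> \<le> real n / real m * ln (real K) + real m * ln (real B)"
      using m by (intro add_mono mult_right_mono of_nat_div_le_of_nat ln_nat_nonneg) auto
    finally have "ln (real (c n)) / real n
        \<le> (real n / real m * ln (real K) + real m * ln (real B)) / real n"
      by (rule divide_right_mono) simp
    also have "\<dots> = ?bound n" using n m by (simp add: field_simps)
    finally show ?thesis .
  qed
  then have "limsup (\<lambda>n. ereal (ln (real (c n)) / real n)) \<le> limsup (\<lambda>n. ereal (?bound n))"
    by (intro Limsup_mono) (auto simp: eventually_sequentially)
  also have "\<dots> = ereal (ln (real K) / real m)"
  proof (rule lim_imp_Limsup)
    have "?bound \<longlonglongrightarrow> ln (real K) / real m + 0"
      by (intro tendsto_add tendsto_const lim_const_over_n)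
    then show "(\<lambda>n. ereal (?bound n)) \<longlonglongrightarrow> ereal (ln (real K) / real m)" by simp
  qed simp
  finally show ?thesis .
qed

lemma tendsto_zero_at_right_zero_ereal:
  fixes L :: "real \<Rightarrow> ereal"
  assumes "\<And>\<delta>. 0 \<le> L \<delta>" and "\<And>\<epsilon>. 0 < \<epsilon> \<Longrightarrow> \<exists>d>0. \<forall>\<delta>\<in>{0<..<d}. L \<delta> \<le> ereal \<epsilon>"
  shows "(L \<longlongrightarrow> 0) (at_right 0)"
proof (rule order_tendstoI)
  fix a :: ereal assume "a < 0"
  then show "eventually (\<lambda>\<delta>. a < L \<delta>) (at_right 0)"
    using assms(1) by (intro always_eventually) (meson less_le_trans)
next
  fix a :: ereal assume "0 < a"
  then obtain \<epsilon> where \<epsilon>: "0 < \<epsilon>" "ereal \<epsilon> < a" using ereal_dense2 by force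
  then obtain d where "d > 0" "\<forall>\<delta>\<in>{0<..<d}. L \<delta> \<le> ereal \<epsilon>" using assms(2) by blast
  then have less: "\<forall>\<delta>\<in>{0<..<d}. L \<delta> < a" using \<epsilon>(2) le_less_trans by blast
  show "eventually (\<lambda>\<delta>. L \<delta> < a) (at_right 0)"
    using eventually_at_right_real[OF \<open>d > 0\<close>] by (rule eventually_mono) (use less in blast)
qed

section \<open>Itineraries and cylinders\<close>

lemma pw_contractionD:
  assumes "pw_contraction X lam N A phi f"
  shows "f ` X \<subseteq> X" "\<And>i. i \<in> {1..N} \<Longrightarrow> A i \<subseteq> X"
    "\<And>i j. i \<in> {1..N} \<Longrightarrow> j \<in> {1..N} \<Longrightarrow> i \<noteq> j \<Longrightarrow> A i \<inter> A j = {}"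
    "\<And>i. i \<in> {1..N} \<Longrightarrow> phi i ` X \<subseteq> X"
    "\<And>i. i \<in> {1..N} \<Longrightarrow> lam-lipschitz_on X (phi i)"
    "\<And>i x. i \<in> {1..N} \<Longrightarrow> x \<in> A i \<Longrightarrow> f x = phi i x"
  using assms unfolding pw_contraction_def bilip_contr_def by simp_all

lemma funpow_closed:
  assumes "f ` X \<subseteq> X" "x \<in> X"
  shows "(f ^^ n) x \<in> X"
  using assms by (induction n) auto

lemma fold_closed:
  assumes pw: "pw_contraction X lam N A phi f" and "x \<in> X" "set \<alpha> \<subseteq> {1..N}"
  shows "fold phi \<alpha> x \<in> X"
  using assms(2,3)
proof (induction \<alpha> arbitrary: x)
  case (Cons a \<alpha>)
  then have "phi a x \<in> X" using pw_contractionD(4)[OF pw] by auto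
  then show ?case using Cons by auto
qed simp

lemma dist_fold_le:
  assumes pw: "pw_contraction X lam N A phi f" and "x \<in> X" "y \<in> X" "set \<alpha> \<subseteq> {1..N}"
  shows "dist (fold phi \<alpha> x) (fold phi \<alpha> y) \<le> lam ^ length \<alpha> * dist x y"
  using assms(2-4)
proof (induction \<alpha> arbitrary: x y)
  case (Cons a \<alpha>)
  have a: "a \<in> {1..N}" using Cons by auto
  then have xy: "phi a x \<in> X" "phi a y \<in> X" using pw_contractionD(4)[OF pw] Cons by auto
  have lip: "lam-lipschitz_on X (phi a)" using pw_contractionD(5)[OF pw a] .
  have "dist (phi a x) (phi a y) \<le> lam * dist x y" using lipschitz_onD[OF lip Cons(2,3)] .
  moreover have "0 \<le> lam" using lip lipschitz_on_nonneg by blast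
  ultimately have "lam ^ length \<alpha> * dist (phi a x) (phi a y) \<le> lam ^ length \<alpha> * (lam * dist x y)"
    by (simp add: mult_left_mono)
  then show ?case using Cons.IH[OF xy] Cons by (simp add: algebra_simps)
qed simp

lemma itineraries_iff:
  assumes "pw_contraction X lam N A phi f"
  shows "\<alpha> \<in> itineraries X N A f n \<longleftrightarrow> length \<alpha> = n \<and> set \<alpha> \<subseteq> {1..N} \<and>
     (\<exists>x\<in>X. \<forall>j<n. (f ^^ j) x \<in> A (\<alpha> ! j))"
proof -
  have "(f ^^ j) x \<notin> sing_set X N A"
    if "set \<alpha> \<subseteq> {1..N}" "length \<alpha> = n" "j < n" "(f ^^ j) x \<in> A (\<alpha> ! j)" for x j
  proof -
    have "\<alpha> ! j \<in> {1..N}" using that(1) nth_mem[of j \<alpha>] that(2,3) by blast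
    then show ?thesis using that unfolding sing_set_def by auto
  qed
  then show ?thesis unfolding itineraries_def by blast
qed

lemma itineraries_subset_lists: "itineraries X N A f n \<subseteq> {xs. set xs \<subseteq> {1..N} \<and> length xs = n}"
  unfolding itineraries_def by auto

lemma finite_itineraries: "finite (itineraries X N A f n)"
  by (rule finite_subset[OF itineraries_subset_lists finite_lists_length_eq]) simp

lemma itinerary_shift:
  assumes "\<forall>j<a + b. (f ^^ j) x \<in> A (\<gamma> ! j)" "length \<gamma> = a + b"
  shows "\<forall>j<b. (f ^^ j) ((f ^^ a) x) \<in> A (drop a \<gamma> ! j)"
proof (intro allI impI)
  fix j assume "j < b"
  then have "(f ^^ (j + a)) x \<in> A (\<gamma> ! (j + a))" and "\<gamma> ! (j + a) = drop a \<gamma> ! j"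
    using assms by (simp_all add: add.commute)
  then show "(f ^^ j) ((f ^^ a) x) \<in> A (drop a \<gamma> ! j)" by (simp add: funpow_add)
qed

lemma itineraries_take_drop:
  assumes pw: "pw_contraction X lam N A phi f" and \<gamma>: "\<gamma> \<in> itineraries X N A f (a + b)"
  shows "take a \<gamma> \<in> itineraries X N A f a" "drop a \<gamma> \<in> itineraries X N A f b"
proof -
  obtain x where x: "x \<in> X" "\<forall>j<a + b. (f ^^ j) x \<in> A (\<gamma> ! j)"
    and len: "length \<gamma> = a + b" and set: "set \<gamma> \<subseteq> {1..N}"
    using \<gamma> itineraries_iff[OF pw] by auto
  have "set (take a \<gamma>) \<subseteq> {1..N}" "set (drop a \<gamma>) \<subseteq> {1..N}"
    using set set_take_subset set_drop_subset by (metis order_trans)+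
  moreover have "\<forall>j<a. (f ^^ j) x \<in> A (take a \<gamma> ! j)" using x(2) by simp
  moreover have "(f ^^ a) x \<in> X" using funpow_closed[OF pw_contractionD(1)[OF pw] x(1)] .
  ultimately show "take a \<gamma> \<in> itineraries X N A f a" "drop a \<gamma> \<in> itineraries X N A f b"
    unfolding itineraries_iff[OF pw] using x(1) itinerary_shift[OF x(2) len] len by auto
qed

lemma funpow_eq_fold_itinerary:
  assumes pw: "pw_contraction X lam N A phi f" and "set \<alpha> \<subseteq> {1..N}"
    and "\<forall>j<length \<alpha>. (f ^^ j) x \<in> A (\<alpha> ! j)" and "k \<le> length \<alpha>"
  shows "(f ^^ k) x = fold phi (take k \<alpha>) x"
  using assms(4)
proof (induction k)
  case (Suc k)
  then have k: "k < length \<alpha>" by simp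
  have "\<alpha> ! k \<in> {1..N}" using assms(2) k nth_mem by blast
  moreover have "(f ^^ k) x \<in> A (\<alpha> ! k)" using assms(3) k by blast
  ultimately have "(f ^^ Suc k) x = phi (\<alpha> ! k) ((f ^^ k) x)"
    using pw_contractionD(6)[OF pw] by simp
  then show ?case using Suc k by (simp add: take_Suc_conv_app_nth)
qed simp

lemma itinerary_in_cylinder:
  assumes pw: "pw_contraction X lam N A phi f" and "set \<alpha> \<subseteq> {1..N}"
    and "\<forall>j<length \<alpha>. (f ^^ j) x \<in> A (\<alpha> ! j)"
  shows "x \<in> cylinder A phi \<alpha>"
  unfolding cylinder_def
proof (intro CollectI allI impI)
  fix j assume j: "j < length \<alpha>"
  then have "(f ^^ j) x \<in> A (\<alpha> ! j)" using assms(3) by blast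
  then show "fold phi (take j \<alpha>) x \<in> A (\<alpha> ! j)"
    using funpow_eq_fold_itinerary[OF assms, of j] j by simp
qed

lemma itinerary_append_cylinder:
  assumes pw: "pw_contraction X lam N A phi f"
    and "\<alpha> @ \<beta> \<in> itineraries X N A f (length \<alpha> + length \<beta>)"
  shows "\<exists>x\<in>X. fold phi \<alpha> x \<in> cylinder A phi \<beta>"
proof -
  obtain x where x: "x \<in> X" "\<forall>j<length \<alpha> + length \<beta>. (f ^^ j) x \<in> A ((\<alpha> @ \<beta>) ! j)"
    and set: "set (\<alpha> @ \<beta>) \<subseteq> {1..N}"
    using assms(2) unfolding itineraries_iff[OF pw] by blast
  have "(f ^^ length \<alpha>) x = fold phi \<alpha> x"
    using funpow_eq_fold_itinerary[OF pw set, of x "length \<alpha>"] x(2) by simp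
  moreover have "(f ^^ length \<alpha>) x \<in> cylinder A phi \<beta>"
  proof (rule itinerary_in_cylinder[OF pw])
    show "set \<beta> \<subseteq> {1..N}" using set by simp
    show "\<forall>j<length \<beta>. (f ^^ j) ((f ^^ length \<alpha>) x) \<in> A (\<beta> ! j)"
      using itinerary_shift[OF x(2)] by simp
  qed
  ultimately show ?thesis using x(1) by auto
qed

lemma cylinder_label_unique:
  assumes pw: "pw_contraction X lam N A phi f" and len: "length \<beta> = length \<beta>'"
    and set: "set \<beta> \<subseteq> {1..N}" "set \<beta>' \<subseteq> {1..N}"
    and y: "y \<in> cylinder A phi \<beta>" "y \<in> cylinder A phi \<beta>'"
  shows "\<beta> = \<beta>'"
proof -
  have "j < length \<beta> \<longrightarrow> \<beta> ! j = \<beta>' ! j" for j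
  proof (induction j rule: less_induct)
    case (less j)
    show ?case
    proof
      assume j: "j < length \<beta>"
      have "take j \<beta> = take j \<beta>'"
        using less j len by (intro nth_equalityI) auto
      moreover have "fold phi (take j \<beta>) y \<in> A (\<beta> ! j)"
        using y(1) j unfolding cylinder_def by blast
      moreover have "fold phi (take j \<beta>') y \<in> A (\<beta>' ! j)"
        using y(2) j len unfolding cylinder_def by auto
      moreover have "\<beta> ! j \<in> {1..N}" using set(1) j nth_mem by blast
      moreover have "\<beta>' ! j \<in> {1..N}" using set(2) j len nth_mem by (metis subsetD)
      ultimately show "\<beta> ! j = \<beta>' ! j" using pw_contractionD(3)[OF pw] by fastforce
    qed
  qed
  then show ?thesis using len by (intro nth_equalityI) auto
qed

lemma finite_cyl_coll: "finite (cyl_coll N A phi m)"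
proof -
  have "cyl_coll N A phi m \<subseteq> cylinder A phi ` {xs. set xs \<subseteq> {1..N} \<and> length xs = m}"
    unfolding cyl_coll_def by blast
  then show ?thesis by (rule finite_subset[OF _ finite_imageI[OF finite_lists_length_eq]]) simp
qed

section \<open>Subexponential growth of the itineraries of a single map\<close>

lemma lebesgue_number_mult:
  assumes "compact X" "finite C"
  obtains r where "r > 0" "\<And>p. p \<in> X \<Longrightarrow> card {B\<in>C. B \<inter> ball p r \<noteq> {}} \<le> mult X C"
proof -
  define G where "G x = - (\<Union>B\<in>{B\<in>C. x \<notin> closure B}. closure B)" for x
  have "open (G x)" for x
    unfolding G_def using assms(2) by (intro open_Compl closed_UN) auto
  moreover have "X \<subseteq> \<Union>(G ` X)"
    by (auto simp: G_def)
  ultimately obtain r where r: "0 < r" "\<And>x. x \<in> X \<Longrightarrow> \<exists>g\<in>G ` X. ball x r \<subseteq> g"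
    by (metis (no_types, lifting) Heine_Borel_lemma[OF assms(1)] imageE)
  have bdd: "bdd_above ((\<lambda>x. card {B\<in>C. x \<in> closure B}) ` X)"
    using assms(2) by (intro bdd_aboveI[of _ "card C"]) (auto intro!: card_mono)
  have "card {B\<in>C. B \<inter> ball p r \<noteq> {}} \<le> mult X C" if p: "p \<in> X" for p
  proof -
    obtain x where x: "x \<in> X" "ball p r \<subseteq> G x" using r(2)[OF p] by blast
    have "{B\<in>C. B \<inter> ball p r \<noteq> {}} \<subseteq> {B\<in>C. x \<in> closure B}"
    proof safe
      fix B y assume B: "B \<in> C" "y \<in> B" "y \<in> ball p r"
      show "x \<in> closure B"
      proof (rule ccontr)
        assume "x \<notin> closure B"
        then have "y \<notin> G x" using B closure_subset unfolding G_def by blast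
        then show False using B x by blast
      qed
    qed
    then have "card {B\<in>C. B \<inter> ball p r \<noteq> {}} \<le> card {B\<in>C. x \<in> closure B}"
      using assms(2) by (intro card_mono) auto
    also have "\<dots> \<le> mult X C" unfolding mult_def using cSUP_upper[OF x(1) bdd] .
    finally show ?thesis .
  qed
  then show ?thesis using that r(1) by blast
qed

lemma card_continuations_le:
  assumes pw: "pw_contraction X lam N A phi f" and lam: "0 \<le> lam"
    and r: "\<And>p. p \<in> X \<Longrightarrow> card {B\<in>cyl_coll N A phi m. B \<inter> ball p r \<noteq> {}} \<le> M"
    and D: "\<forall>x\<in>X. \<forall>y\<in>X. dist x y \<le> D" and small: "lam ^ length \<alpha> * D < r"
  shows "card {\<beta>. \<alpha> @ \<beta> \<in> itineraries X N A f (length \<alpha> + m)} \<le> M"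
proof (cases "{\<beta>. \<alpha> @ \<beta> \<in> itineraries X N A f (length \<alpha> + m)} = {}")
  case False
  define E where "E = {\<beta>. \<alpha> @ \<beta> \<in> itineraries X N A f (length \<alpha> + m)}"
  have E: "length \<beta> = m" "set \<beta> \<subseteq> {1..N}" "set \<alpha> \<subseteq> {1..N}" if "\<beta> \<in> E" for \<beta>
    using that itineraries_iff[OF pw] unfolding E_def by auto
  obtain \<beta>0 where \<beta>0: "\<beta>0 \<in> E" using False unfolding E_def by blast
  have "\<exists>x\<in>X. fold phi \<alpha> x \<in> cylinder A phi \<beta>" if "\<beta> \<in> E" for \<beta>
    using that E(1)[OF that] unfolding E_def by (intro itinerary_append_cylinder[OF pw]) simp
  then obtain x where x: "\<And>\<beta>. \<beta> \<in> E \<Longrightarrow> x \<beta> \<in> X \<and> fold phi \<alpha> (x \<beta>) \<in> cylinder A phi \<beta>"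
    by metis
  define p where "p = fold phi \<alpha> (x \<beta>0)"
  have "p \<in> X" unfolding p_def using fold_closed[OF pw conjunct1[OF x[OF \<beta>0]] E(3)[OF \<beta>0]] .
  have near: "cylinder A phi ` E \<subseteq> {B\<in>cyl_coll N A phi m. B \<inter> ball p r \<noteq> {}}"
  proof
    fix B assume "B \<in> cylinder A phi ` E"
    then obtain \<beta> where \<beta>: "\<beta> \<in> E" and B: "B = cylinder A phi \<beta>" by blast
    have "dist p (fold phi \<alpha> (x \<beta>)) \<le> lam ^ length \<alpha> * dist (x \<beta>0) (x \<beta>)"
      unfolding p_def by (rule dist_fold_le[OF pw conjunct1[OF x[OF \<beta>0]] conjunct1[OF x[OF \<beta>]] E(3)[OF \<beta>]])
    also have "\<dots> \<le> lam ^ length \<alpha> * D"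
      using D conjunct1[OF x[OF \<beta>0]] conjunct1[OF x[OF \<beta>]] lam by (intro mult_left_mono) simp_all
    finally have "fold phi \<alpha> (x \<beta>) \<in> B \<inter> ball p r" using small x[OF \<beta>] B by simp
    then show "B \<in> {B\<in>cyl_coll N A phi m. B \<inter> ball p r \<noteq> {}}"
      unfolding cyl_coll_def using B E[OF \<beta>] by blast
  qed
  have "inj_on (cylinder A phi) E"
  proof (rule inj_onI)
    fix \<beta> \<beta>' assume \<beta>: "\<beta> \<in> E" "\<beta>' \<in> E" "cylinder A phi \<beta> = cylinder A phi \<beta>'"
    then have "fold phi \<alpha> (x \<beta>) \<in> cylinder A phi \<beta>'" using x[OF \<beta>(1)] by simp
    then show "\<beta> = \<beta>'"
      using cylinder_label_unique[OF pw _ E(2)[OF \<beta>(1)] E(2)[OF \<beta>(2)] conjunct2[OF x[OF \<beta>(1)]]]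
        E(1) \<beta> by simp
  qed
  then have "card E = card (cylinder A phi ` E)" by (simp add: card_image)
  also have "\<dots> \<le> card {B\<in>cyl_coll N A phi m. B \<inter> ball p r \<noteq> {}}"
    by (rule card_mono[OF _ near]) (simp add: finite_cyl_coll)
  also have "\<dots> \<le> M" using r \<open>p \<in> X\<close> .
  finally show ?thesis unfolding E_def .
qed simp

lemma card_itineraries_add_le:
  assumes pw: "pw_contraction X lam N A phi f" and lam: "0 \<le> lam"
    and r: "\<And>p. p \<in> X \<Longrightarrow> card {B\<in>cyl_coll N A phi m. B \<inter> ball p r \<noteq> {}} \<le> M"
    and D: "\<forall>x\<in>X. \<forall>y\<in>X. dist x y \<le> D" and small: "lam ^ n * D < r"
  shows "card (itineraries X N A f (n + m)) \<le> card (itineraries X N A f n) * M"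
proof -
  let ?I = "itineraries X N A f"
  let ?E = "\<lambda>\<alpha>. {\<beta>. \<alpha> @ \<beta> \<in> ?I (n + m)}"
  have split: "?I (n + m) = (\<Union>\<alpha>\<in>?I n. (@) \<alpha> ` ?E \<alpha>)"
  proof (intro equalityI subsetI)
    fix \<gamma> assume \<gamma>: "\<gamma> \<in> ?I (n + m)"
    have "drop n \<gamma> \<in> ?E (take n \<gamma>)" using \<gamma> by simp
    then have "\<gamma> \<in> (@) (take n \<gamma>) ` ?E (take n \<gamma>)"
      by (rule image_eqI[rotated]) simp
    then show "\<gamma> \<in> (\<Union>\<alpha>\<in>?I n. (@) \<alpha> ` ?E \<alpha>)"
      using itineraries_take_drop(1)[OF pw \<gamma>] by blast
  qed auto
  have "card (?I (n + m)) = card (\<Union>\<alpha>\<in>?I n. (@) \<alpha> ` ?E \<alpha>)"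
    by (rule arg_cong[OF split])
  also have "\<dots> \<le> (\<Sum>\<alpha>\<in>?I n. card ((@) \<alpha> ` ?E \<alpha>))"
    by (rule card_UN_le[OF finite_itineraries])
  also have "\<dots> = (\<Sum>\<alpha>\<in>?I n. card (?E \<alpha>))"
    by (intro sum.cong refl card_image) (simp add: inj_on_def)
  also have "\<dots> \<le> (\<Sum>\<alpha>\<in>?I n. M)"
  proof (rule sum_mono)
    fix \<alpha> assume "\<alpha> \<in> ?I n"
    then have "length \<alpha> = n" using itineraries_iff[OF pw] by blast
    then show "card (?E \<alpha>) \<le> M" using card_continuations_le[OF pw lam r D, of \<alpha>] small by simp
  qed
  finally show ?thesis by simp
qed

lemma eventually_card_itineraries_add_le:
  assumes pw: "pw_contraction X lam N A phi f" and "compact X" and "0 \<le> lam" "lam < 1"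
  shows "\<exists>n0. \<forall>n\<ge>n0. card (itineraries X N A f (n + m))
           \<le> card (itineraries X N A f n) * mult X (cyl_coll N A phi m)"
proof -
  obtain r where r: "r > 0"
    "\<And>p. p \<in> X \<Longrightarrow> card {B\<in>cyl_coll N A phi m. B \<inter> ball p r \<noteq> {}} \<le> mult X (cyl_coll N A phi m)"
    using lebesgue_number_mult[OF \<open>compact X\<close> finite_cyl_coll] by blast
  obtain D0 where "\<forall>x\<in>X. \<forall>y\<in>X. dist x y \<le> D0"
    using compact_imp_bounded[OF \<open>compact X\<close>] bounded_two_points by blast
  then have D: "\<forall>x\<in>X. \<forall>y\<in>X. dist x y \<le> max D0 1" and "max D0 1 > 0"
    by (auto intro: max.coboundedI1)
  then obtain n0 where n0: "lam ^ n0 < r / max D0 1"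
    using real_arch_pow_inv[of "r / max D0 1" lam] r(1) \<open>lam < 1\<close> by auto
  have small: "lam ^ n * max D0 1 < r" if "n \<ge> n0" for n
  proof -
    have "lam ^ n * max D0 1 \<le> lam ^ n0 * max D0 1"
      using that assms(3,4) by (intro mult_right_mono power_decreasing) auto
    also have "\<dots> < r" using n0 \<open>max D0 1 > 0\<close> by (simp add: pos_less_divide_eq)
    finally show ?thesis .
  qed
  then show ?thesis using card_itineraries_add_le[OF pw assms(3) r(2) D small] by blast
qed

lemma exists_itineraries_growth_le:
  assumes pw: "pw_contraction X lam N A phi f" and "compact X" "0 \<le> lam" "lam < 1"
    and H: "H_mult X N A phi = 0" and "0 < \<epsilon>"
  shows "\<exists>m\<ge>1. ln (real (card (itineraries X N A f m))) / real m \<le> \<epsilon>"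
proof -
  have "limsup (\<lambda>n. ereal (ln (real (mult X (cyl_coll N A phi n))) / real n)) < ereal \<epsilon>"
    using H \<open>0 < \<epsilon>\<close> unfolding H_mult_def by simp
  then have "eventually (\<lambda>n. ln (real (mult X (cyl_coll N A phi n))) / real n < \<epsilon>) sequentially"
    by (auto dest: Limsup_lessD)
  then obtain m0 where "\<And>m. m \<ge> m0 \<Longrightarrow> ln (real (mult X (cyl_coll N A phi m))) / real m < \<epsilon>"
    unfolding eventually_sequentially by blast
  then obtain m where m: "m \<ge> 1" "ln (real (mult X (cyl_coll N A phi m))) / real m < \<epsilon>"
    by (metis max.cobounded1 max.cobounded2)
  obtain n0 where n0: "\<And>n. n \<ge> n0 \<Longrightarrow> card (itineraries X N A f (n + m))
      \<le> card (itineraries X N A f n) * mult X (cyl_coll N A phi m)"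
    using eventually_card_itineraries_add_le[OF pw assms(2-4)] by blast
  show ?thesis
    by (rule exists_ln_div_le_of_eventually_submult[where c = "\<lambda>n. card (itineraries X N A f n)",
          OF m(1) n0 m(2)])
qed

section \<open>Itineraries along the family\<close>

lemma J_set_subset_lists: "J_set X U N A f \<delta> \<mu>0 n \<subseteq> {xs. set xs \<subseteq> {1..N} \<and> length xs = n}"
  unfolding J_set_def using itineraries_subset_lists by blast

lemma finite_J_set: "finite (J_set X U N A f \<delta> \<mu>0 n)"
  by (rule finite_subset[OF J_set_subset_lists finite_lists_length_eq]) simp

lemma card_J_set_le:
  assumes pw: "\<forall>\<mu>\<in>U. pw_contraction X lam N (A \<mu>) (phi \<mu>) (f \<mu>)"
    and stable: "\<forall>\<mu>\<in>U \<inter> ball \<mu>0 \<delta>. itineraries X N (A \<mu>) (f \<mu>) m = itineraries X N (A \<mu>0) (f \<mu>0) m"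
  shows "card (J_set X U N A f \<delta> \<mu>0 (k * m + s))
           \<le> card (itineraries X N (A \<mu>0) (f \<mu>0) m) ^ k * N ^ s"
proof (induction k)
  case 0
  have "card (J_set X U N A f \<delta> \<mu>0 s) \<le> card {xs. set xs \<subseteq> {1..N} \<and> length xs = s}"
    by (rule card_mono[OF finite_lists_length_eq J_set_subset_lists]) simp
  then show ?case by (simp add: card_lists_length_eq)
next
  case (Suc k)
  let ?J = "J_set X U N A f \<delta> \<mu>0"
  let ?I0 = "itineraries X N (A \<mu>0) (f \<mu>0) m"
  have split: "?J (Suc k * m + s) \<subseteq> (\<lambda>(a, b). a @ b) ` (?I0 \<times> ?J (k * m + s))"
  proof
    fix \<gamma> assume "\<gamma> \<in> ?J (Suc k * m + s)"
    then obtain \<mu> where \<mu>: "\<mu> \<in> U \<inter> ball \<mu>0 \<delta>"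
      and \<gamma>: "\<gamma> \<in> itineraries X N (A \<mu>) (f \<mu>) (m + (k * m + s))"
      unfolding J_set_def by (auto simp: algebra_simps)
    have pw\<mu>: "pw_contraction X lam N (A \<mu>) (phi \<mu>) (f \<mu>)" using pw \<mu> by blast
    have "take m \<gamma> \<in> ?I0" using itineraries_take_drop(1)[OF pw\<mu> \<gamma>] stable \<mu> by blast
    moreover have "drop m \<gamma> \<in> ?J (k * m + s)"
      using itineraries_take_drop(2)[OF pw\<mu> \<gamma>] \<mu> unfolding J_set_def by blast
    ultimately show "\<gamma> \<in> (\<lambda>(a, b). a @ b) ` (?I0 \<times> ?J (k * m + s))"
      by (intro image_eqI[of _ _ "(take m \<gamma>, drop m \<gamma>)"]) auto
  qed
  have fin: "finite (?I0 \<times> ?J (k * m + s))"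
    by (intro finite_cartesian_product finite_itineraries finite_J_set)
  have "card (?J (Suc k * m + s)) \<le> card ((\<lambda>(a, b). a @ b) ` (?I0 \<times> ?J (k * m + s)))"
    by (rule card_mono[OF finite_imageI[OF fin] split])
  also have "\<dots> \<le> card (?I0 \<times> ?J (k * m + s))" by (rule card_image_le[OF fin])
  also have "\<dots> \<le> card ?I0 * (card ?I0 ^ k * N ^ s)" using Suc by (simp add: card_cartesian_product)
  finally show ?case by (simp add: algebra_simps)
qed

lemma limsup_ln_card_J_set_le:
  assumes pw: "\<forall>\<mu>\<in>U. pw_contraction X lam N (A \<mu>) (phi \<mu>) (f \<mu>)"
    and stable: "\<forall>\<mu>\<in>U \<inter> ball \<mu>0 \<delta>. itineraries X N (A \<mu>) (f \<mu>) m = itineraries X N (A \<mu>0) (f \<mu>0) m"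
    and "m \<ge> 1"
  shows "limsup (\<lambda>n. ereal (ln (real (card (J_set X U N A f \<delta> \<mu>0 n))) / real n))
           \<le> ereal (ln (real (card (itineraries X N (A \<mu>0) (f \<mu>0) m))) / real m)"
  by (rule limsup_ln_div_le_of_block_bound[OF \<open>m \<ge> 1\<close> card_J_set_le[OF pw stable]])

theorem proposition3p11:
  fixes X :: "'a::metric_space set" and lam :: real and U :: "'m::euclidean_space set"
    and N :: nat and A :: "'m \<Rightarrow> nat \<Rightarrow> 'a set" and phi :: "'m \<Rightarrow> nat \<Rightarrow> 'a \<Rightarrow> 'a"
    and f :: "'m \<Rightarrow> 'a \<Rightarrow> 'a" and \<mu>0 :: 'm
  assumes "compact X"
    and "\<forall>x\<in>X. \<forall>r>0. connected (ball x r \<inter> X)"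
    and "0 < lam" and "lam < 1"
    and "U \<in> sets lebesgue" and "emeasure lebesgue U > 0"
    and "\<forall>\<mu>\<in>U. pw_contraction X lam N (A \<mu>) (phi \<mu>) (f \<mu>)"
    and "\<mu>0 \<in> U"
    and "\<forall>n\<ge>1. stable_at X U N A phi f n \<mu>0"
    and "H_mult X N (A \<mu>0) (phi \<mu>0) = 0"
  shows "hypothesis_E X U N A f \<mu>0"
  unfolding hypothesis_E_def
proof (rule tendsto_zero_at_right_zero_ereal[OF limsup_ln_div_nonneg])
  fix \<epsilon> :: real assume "0 < \<epsilon>"
  have pw0: "pw_contraction X lam N (A \<mu>0) (phi \<mu>0) (f \<mu>0)" using assms(7,8) by blast
  obtain m where m: "m \<ge> 1" "ln (real (card (itineraries X N (A \<mu>0) (f \<mu>0) m))) / real m \<le> \<epsilon>"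
    using exists_itineraries_growth_le[OF pw0 assms(1) less_imp_le[OF assms(3)] assms(4,10) \<open>0 < \<epsilon>\<close>]
    by blast
  obtain d where "d > 0"
    and d: "\<forall>\<mu>\<in>U \<inter> ball \<mu>0 d. itineraries X N (A \<mu>) (f \<mu>) m = itineraries X N (A \<mu>0) (f \<mu>0) m"
    using assms(9) m(1) unfolding stable_at_def by blast
  have "limsup (\<lambda>n. ereal (ln (real (card (J_set X U N A f \<delta> \<mu>0 n))) / real n)) \<le> ereal \<epsilon>"
    if "\<delta> \<in> {0<..<d}" for \<delta>
  proof -
    have "limsup (\<lambda>n. ereal (ln (real (card (J_set X U N A f \<delta> \<mu>0 n))) / real n))
        \<le> ereal (ln (real (card (itineraries X N (A \<mu>0) (f \<mu>0) m))) / real m)"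
      by (rule limsup_ln_card_J_set_le[OF assms(7) _ m(1)]) (use d that in auto)
    also have "\<dots> \<le> ereal \<epsilon>" using m(2) by simp
    finally show ?thesis .
  qed
  then show "\<exists>d>0. \<forall>\<delta>\<in>{0<..<d}.
      limsup (\<lambda>n. ereal (ln (real (card (J_set X U N A f \<delta> \<mu>0 n))) / real n)) \<le> ereal \<epsilon>"
    using \<open>d > 0\<close> by blast
qed

end
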